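(* Assume (V), (G1)–(G5). There is a constant $c>0$ such that for all $u\in E_{2,\mu}$, $$\int_{\mathbb R^N}G(x,u)\,dx\ \ge\ c\,\min\{|u|_{2,\mu}^2,\ |u|_{2,\mu}^\mu\}.$$
   Context: Let $N\ge1$, $2^*=\frac{2N}{N-2}$ if $N\ge3$, $2^*=\infty$ otherwise. $S=-\Delta+V$ with domain $H^2(\mathbb R^N)$; $G(x,u)=\int_0^ug(x,s)ds$. (V) $V\in C(\mathbb R^N,\mathbb R)$ 1-periodic in each $x_i$, $0\in\sigma(S)$, $(0,\beta]\cap\sigma(S)=\emptyset$ for some $\beta>0$. (G1) $g\in C(\mathbb R^N\times\mathbb R,\mathbb R)$ 1-periodic in each $x_i$. (G2) There are $a>0$, $2<\mu\le p<2^*$ with $|g(x,u)|\le a(|u|^{\mu-1}+|u|^{p-1})$. (G3) There is $b>0$ with $G(x,u)\ge b|u|^\mu$ for $|u|\le1$. (G4) $G(x,u)/|u|^2\to\infty$ uniformly in $x$ as $|u|\to\infty$. (G5) $u\mapsto g(x,u)/|u|$ strictly increasing on $(-\infty,0)$ and $(0,\infty)$. Spaces: $(P_\lambda)$ spectral family of $S$, $E^+=H^1\cap(\mathrm{id}-P_0)L^2$, $E'=H^1\cap P_0L^2$, $\|u\|_E^2=\int|\lambda|d|P_\lambda u|_2^2$; $L^{2,\mu}=L^2+L^\mu$ with norm $|v|_{2,\mu}=\inf\{|v_1|_2+|v_2|_\mu:v=v_1+v_2\}$; $E'_{2,\mu}$ the completion of $E'$ w.r.t. $(\|\cdot\|_E^2+|\cdot|_{2,\mu}^2)^{1/2}$;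 $E_{2,\mu}=E^+\oplus E'_{2,\mu}$ (continuously embedded in $L^{2,\mu}$). *)

theory Defs
  imports "HOL-Analysis.Analysis"
begin

definition prim :: "('x \<Rightarrow> real \<Rightarrow> real) \<Rightarrow> 'x \<Rightarrow> real \<Rightarrow> real" where
  "prim g x u = (if 0 \<le> u then integral {0..u} (g x) else - integral {u..0} (g x))"

definition in_Lp :: "real \<Rightarrow> ('a::euclidean_space \<Rightarrow> real) \<Rightarrow> bool" where
  "in_Lp q f \<longleftrightarrow> f \<in> borel_measurable lborel \<and> integrable lborel (\<lambda>x. \<bar>f x\<bar> powr q)"

definition Lp_norm :: "real \<Rightarrow> ('a::euclidean_space \<Rightarrow> real) \<Rightarrow> real" where
  "Lp_norm q f = (\<integral>x. \<bar>f x\<bar> powr q \<partial>lborel) powr (1 / q)"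

definition in_L2mu :: "real \<Rightarrow> ('a::euclidean_space \<Rightarrow> real) \<Rightarrow> bool" where
  "in_L2mu \<mu> v \<longleftrightarrow> (\<exists>v1 v2. in_Lp 2 v1 \<and> in_Lp \<mu> v2 \<and> (\<forall>x. v x = v1 x + v2 x))"

definition L2mu_norm :: "real \<Rightarrow> ('a::euclidean_space \<Rightarrow> real) \<Rightarrow> real" where
  "L2mu_norm \<mu> v = Inf {Lp_norm 2 v1 + Lp_norm \<mu> v2 | v1 v2.
      in_Lp 2 v1 \<and> in_Lp \<mu> v2 \<and> (\<forall>x. v x = v1 x + v2 x)}"

end

theory Submission
  imports Defs
begin

text \<open>Split u into its large part (where |u| > 1) and its small part. By (G5) the primitive G
  grows at least quadratically beyond the unit interval, and by (G3) it dominates b|u|^\<mu> on it,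
  so G(x,u) \<ge> b (|u_large|^2 + |u_small|^\<mu>) pointwise. For u = v1 + v2 with v1 \<in> L^2 and
  v2 \<in> L^\<mu>, the large part lies in L^2 and the small part in L^\<mu>, both dominated by
  4|v1|^2 + 2^\<mu>|v2|^\<mu>. Since |u|_{2,\<mu>} \<le> |u_large|_2 + |u_small|_\<mu>, comparing
  min(n^2, n^\<mu>) with the two integrals gives the claim.\<close>

lemma integral_ge_quadratic:
  fixes f :: "real \<Rightarrow> real" and b u :: real
  assumes cont: "continuous_on UNIV f" and f0: "f 0 = 0"
    and mono: "strict_mono_on {0<..} (\<lambda>u. f u / \<bar>u\<bar>)"
    and b: "b \<le> integral {0..1} f" and u: "1 \<le> u"
  shows "b * u\<^sup>2 \<le> integral {0..u} f"
proof -
  have int: "\<And>a c. f integrable_on {a..c}"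
    by (rule integrable_continuous_real) (use cont continuous_on_subset in blast)
  have below_chord: "f s \<le> s * f 1" if "0 \<le> s" "s \<le> 1" for s
  proof (cases "s = 0 \<or> s = 1")
    case False
    have "f s / \<bar>s\<bar> < f 1 / \<bar>1\<bar>"
      by (rule strict_mono_onD[OF mono]) (use that False in auto)
    with False that show ?thesis by (simp add: field_simps)
  qed (use f0 in auto)
  have above_chord: "s * f 1 \<le> f s" if "1 \<le> s" for s
  proof (cases "s = 1")
    case False
    have "f 1 / \<bar>1\<bar> < f s / \<bar>s\<bar>"
      by (rule strict_mono_onD[OF mono]) (use that False in auto)
    with False that show ?thesis by (simp add: field_simps)
  qed simp
  define I where "I = integral {0..1} f"
  have "I \<le> integral {0..1} (\<lambda>s. s * f 1)"
    unfolding I_def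
    by (rule integral_le[OF int]) (auto intro!: integrable_continuous_real continuous_intros below_chord)
  then have I_le: "I \<le> f 1 / 2" by simp
  have "integral {1..u} (\<lambda>s. s * f 1) \<le> integral {1..u} f"
    by (rule integral_le[OF _ int]) (auto intro!: integrable_continuous_real continuous_intros above_chord)
  then have tail: "f 1 * (u\<^sup>2 - 1) / 2 \<le> integral {1..u} f"
    using u by (simp add: mult.commute)
  have u2: "0 \<le> u\<^sup>2 - 1" using u by (simp add: one_le_power)
  have "b * u\<^sup>2 \<le> I * u\<^sup>2" using b I_def by (simp add: mult_right_mono)
  also have "\<dots> \<le> I + integral {1..u} f"
    using mult_right_mono[OF I_le u2] tail by (simp add: algebra_simps)
  also have "\<dots> = integral {0..u} f"
    unfolding I_def using Henstock_Kurzweil_Integration.integral_combine[where a=0 and c=1 and b=u and f=f] int u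
    by simp
  finally show ?thesis .
qed

lemma prim_ge_quadratic:
  fixes g :: "'x \<Rightarrow> real \<Rightarrow> real"
  assumes cont: "continuous_on UNIV (g x)" and g0: "g x 0 = 0"
    and G3: "\<And>u. \<bar>u\<bar> \<le> 1 \<Longrightarrow> b * \<bar>u\<bar> powr \<mu> \<le> prim g x u"
    and G5: "strict_mono_on {0<..} (\<lambda>u. g x u / \<bar>u\<bar>) \<and>
             strict_mono_on {..<0} (\<lambda>u. g x u / \<bar>u\<bar>)"
    and u: "1 < \<bar>u\<bar>"
  shows "b * u\<^sup>2 \<le> prim g x u"
proof (cases "0 \<le> u")
  case True
  have "b \<le> integral {0..1} (g x)" using G3[of 1] by (simp add: prim_def)
  then show ?thesis
    using integral_ge_quadratic[OF cont g0 conjunct1[OF G5]] u True by (auto simp: prim_def)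
next
  case False
  \<comment> \<open>reflect: f(s) = -g(x,-s) satisfies the hypotheses of the case u > 0\<close>
  define f where "f = (\<lambda>s. - g x (-s))"
  have f_cont: "continuous_on UNIV f" unfolding f_def
    by (intro continuous_intros continuous_on_compose2[OF cont]) auto
  have f_mono: "strict_mono_on {0<..} (\<lambda>u. f u / \<bar>u\<bar>)"
  proof (rule strict_mono_onI)
    fix r s :: real assume rs: "r \<in> {0<..}" "s \<in> {0<..}" "r < s"
    have "g x (-s) / \<bar>-s\<bar> < g x (-r) / \<bar>-r\<bar>"
      by (rule strict_mono_onD[OF conjunct2[OF G5]]) (use rs in auto)
    then show "f r / \<bar>r\<bar> < f s / \<bar>s\<bar>" using rs by (simp add: f_def)
  qed
  have f_integral: "integral {0..t} f = - integral {-t..0} (g x)" for t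
  proof -
    have "integral {0..t} f = - integral {-0..-(-t)} (\<lambda>s. g x (-s))"
      by (simp only: f_def integral_neg minus_zero minus_minus)
    also have "\<dots> = - integral {-t..0} (g x)"
      by (simp only: Henstock_Kurzweil_Integration.integral_reflect_real)
    finally show ?thesis .
  qed
  have "b \<le> integral {0..1} f" using G3[of "-1"] by (simp add: prim_def f_integral)
  then have "b * (-u)\<^sup>2 \<le> integral {0..-u} f"
    using integral_ge_quadratic[OF f_cont _ f_mono, of b "-u"] u False by (simp add: f_def g0)
  then show ?thesis using False by (simp add: prim_def f_integral)
qed

definition large_part :: "('a \<Rightarrow> real) \<Rightarrow> 'a \<Rightarrow> real" where
  "large_part u x = (if 1 < \<bar>u x\<bar> then u x else 0)"

definition small_part :: "('a \<Rightarrow> real) \<Rightarrow> 'a \<Rightarrow> real" where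
  "small_part u x = (if 1 < \<bar>u x\<bar> then 0 else u x)"

lemma large_part_plus_small_part: "large_part u x + small_part u x = u x"
  by (simp add: large_part_def small_part_def)

lemma abs_powr_two: "\<bar>v::real\<bar> powr 2 = v\<^sup>2"
  by (cases "v = 0") (simp_all add: powr_numeral)

lemma large_value_sum_bound:
  fixes v1 v2 \<mu> :: real
  assumes "2 < \<mu>" "1 < \<bar>v1 + v2\<bar>"
  shows "(v1 + v2)\<^sup>2 \<le> 4 * \<bar>v1\<bar> powr 2 + 2 powr \<mu> * \<bar>v2\<bar> powr \<mu>"
proof (cases "\<bar>v2\<bar> \<le> \<bar>v1\<bar>")
  case True
  then have "\<bar>v1 + v2\<bar>\<^sup>2 \<le> (2 * \<bar>v1\<bar>)\<^sup>2" by (intro power_mono) auto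
  then show ?thesis by (simp add: abs_powr_two power_mult_distrib add_increasing2)
next
  case False
  then have le: "\<bar>v1 + v2\<bar> \<le> 2 * \<bar>v2\<bar>" and ge1: "1 \<le> 2 * \<bar>v2\<bar>" using assms by auto
  have "(v1 + v2)\<^sup>2 = \<bar>v1 + v2\<bar> powr 2" by (simp add: abs_powr_two)
  also have "\<dots> \<le> (2 * \<bar>v2\<bar>) powr 2" by (rule powr_mono2) (use le in auto)
  also have "\<dots> \<le> (2 * \<bar>v2\<bar>) powr \<mu>" by (rule powr_mono) (use ge1 assms in auto)
  also have "\<dots> = 2 powr \<mu> * \<bar>v2\<bar> powr \<mu>" by (simp add: powr_mult)
  finally show ?thesis by (simp add: add_increasing)
qed

lemma small_value_sum_bound:
  fixes v1 v2 \<mu> :: real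
  assumes "2 < \<mu>" "\<bar>v1 + v2\<bar> \<le> 1"
  shows "\<bar>v1 + v2\<bar> powr \<mu> \<le> 4 * \<bar>v1\<bar> powr 2 + 2 powr \<mu> * \<bar>v2\<bar> powr \<mu>"
proof (cases "\<bar>v1\<bar> \<le> \<bar>v2\<bar>")
  case True
  then have "\<bar>v1 + v2\<bar> powr \<mu> \<le> (2 * \<bar>v2\<bar>) powr \<mu>" by (intro powr_mono2) (use assms in auto)
  then show ?thesis by (simp add: powr_mult add_increasing)
next
  case False
  then have le: "\<bar>v1 + v2\<bar> \<le> 2 * \<bar>v1\<bar>" by auto
  have "\<bar>v1 + v2\<bar> powr \<mu> \<le> \<bar>v1 + v2\<bar> powr 2" by (rule powr_mono') (use assms in auto)
  also have "\<dots> \<le> (2 * \<bar>v1\<bar>) powr 2" by (rule powr_mono2) (use le in auto)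
  also have "\<dots> = 4 * \<bar>v1\<bar> powr 2" by (simp add: powr_mult)
  finally show ?thesis by (simp add: add_increasing2)
qed

lemma in_Lp_large_small_parts:
  fixes u :: "'a::euclidean_space \<Rightarrow> real"
  assumes "in_L2mu \<mu> u" "2 < \<mu>"
  shows "in_Lp 2 (large_part u)" "in_Lp \<mu> (small_part u)"
proof -
  obtain v1 v2 where v1: "in_Lp 2 v1" and v2: "in_Lp \<mu> v2" and uv: "\<And>x. u x = v1 x + v2 x"
    using assms(1) unfolding in_L2mu_def by blast
  have "v1 \<in> borel_measurable lborel" "v2 \<in> borel_measurable lborel"
    using v1 v2 unfolding in_Lp_def by blast+
  moreover have "u = (\<lambda>x. v1 x + v2 x)" using uv by auto
  ultimately have um: "u \<in> borel_measurable lborel" by simp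
  define K where "K x = 4 * \<bar>v1 x\<bar> powr 2 + 2 powr \<mu> * \<bar>v2 x\<bar> powr \<mu>" for x
  have K_int: "integrable lborel K" unfolding K_def using v1 v2 by (simp add: in_Lp_def)
  have K_nonneg: "0 \<le> K x" for x unfolding K_def by simp
  have "\<bar>large_part u x\<bar> powr 2 \<le> K x" for x
    using large_value_sum_bound[OF assms(2)] K_nonneg[of x]
    unfolding large_part_def K_def uv by (auto simp: abs_powr_two)
  moreover have "\<bar>small_part u x\<bar> powr \<mu> \<le> K x" for x
    using small_value_sum_bound[OF assms(2)] K_nonneg[of x]
    unfolding small_part_def K_def uv by auto
  moreover have "large_part u \<in> borel_measurable lborel" "small_part u \<in> borel_measurable lborel"
    unfolding large_part_def[abs_def] small_part_def[abs_def] using um by measurable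
  ultimately show "in_Lp 2 (large_part u)" "in_Lp \<mu> (small_part u)"
    unfolding in_Lp_def using K_nonneg
    by (auto intro: Bochner_Integration.integrable_bound[OF K_int])
qed

lemma L2mu_norm_le_sum:
  assumes "in_Lp 2 v1" "in_Lp \<mu> v2" "\<And>x. u x = v1 x + v2 x"
  shows "0 \<le> L2mu_norm \<mu> u" "L2mu_norm \<mu> u \<le> Lp_norm 2 v1 + Lp_norm \<mu> v2"
proof -
  define S where "S = {Lp_norm 2 w1 + Lp_norm \<mu> w2 | w1 w2.
      in_Lp 2 w1 \<and> in_Lp \<mu> w2 \<and> (\<forall>x. u x = w1 x + w2 x)}"
  have S_nonneg: "\<And>s. s \<in> S \<Longrightarrow> 0 \<le> s" unfolding S_def Lp_norm_def by auto
  have mem: "Lp_norm 2 v1 + Lp_norm \<mu> v2 \<in> S" unfolding S_def using assms by blast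
  show "0 \<le> L2mu_norm \<mu> u" "L2mu_norm \<mu> u \<le> Lp_norm 2 v1 + Lp_norm \<mu> v2"
    unfolding L2mu_norm_def S_def[symmetric] using mem S_nonneg
    by (auto intro!: cInf_greatest cInf_lower bdd_belowI[of S 0])
qed

lemma min_square_powr_le:
  fixes n A B \<mu> :: real
  assumes "0 \<le> n" "0 \<le> A" "0 \<le> B" "2 < \<mu>" "n \<le> sqrt A + B powr (1/\<mu>)"
  shows "min (n\<^sup>2) (n powr \<mu>) \<le> (4 + 2 powr \<mu>) * (A + B)"
proof (cases "B powr (1/\<mu>) \<le> sqrt A")
  case True
  then have "n\<^sup>2 \<le> (2 * sqrt A)\<^sup>2" using assms by (intro power_mono) auto
  then have "n\<^sup>2 \<le> 4 * A" using assms by (simp add: power_mult_distrib)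
  moreover have "4 * A \<le> (4 + 2 powr \<mu>) * (A + B)" using assms by (simp add: algebra_simps)
  ultimately show ?thesis by (meson min.coboundedI1 order.trans)
next
  case False
  then have "n powr \<mu> \<le> (2 * B powr (1/\<mu>)) powr \<mu>" using assms by (intro powr_mono2) auto
  also have "\<dots> = 2 powr \<mu> * B" using assms by (simp add: powr_mult powr_powr)
  finally have "n powr \<mu> \<le> 2 powr \<mu> * B" .
  moreover have "2 powr \<mu> * B \<le> (4 + 2 powr \<mu>) * (A + B)" using assms by (simp add: algebra_simps)
  ultimately show ?thesis by (meson min.coboundedI2 order.trans)
qed

lemma min_square_powr_L2mu_norm_le:
  fixes u :: "'a::euclidean_space \<Rightarrow> real"
  assumes "in_L2mu \<mu> u" "2 < \<mu>"
  shows "min ((L2mu_norm \<mu> u)\<^sup>2) ((L2mu_norm \<mu> u) powr \<mu>)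
           \<le> (4 + 2 powr \<mu>) * ((\<integral>x. \<bar>large_part u x\<bar> powr 2 \<partial>lborel)
                                 + (\<integral>x. \<bar>small_part u x\<bar> powr \<mu> \<partial>lborel))"
proof (rule min_square_powr_le)
  note parts = in_Lp_large_small_parts[OF assms]
  note norm = L2mu_norm_le_sum[OF parts large_part_plus_small_part[symmetric]]
  show "0 \<le> L2mu_norm \<mu> u" by (rule norm(1))
  show "L2mu_norm \<mu> u \<le> sqrt (\<integral>x. \<bar>large_part u x\<bar> powr 2 \<partial>lborel)
                          + (\<integral>x. \<bar>small_part u x\<bar> powr \<mu> \<partial>lborel) powr (1/\<mu>)"
    using norm(2) by (simp add: Lp_norm_def powr_half_sqrt)
qed (use assms in simp_all)

theorem lemma4p1:
  fixes g :: "real^'n \<Rightarrow> real \<Rightarrow> real" and a b \<mu> p :: real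
  assumes G1_cont: "continuous_on UNIV (\<lambda>(x, u). g x u)"
    and G1_per: "\<And>x u i. g (x + axis i 1) u = g x u"
    and G2_a: "a > 0" and G2_mu: "2 < \<mu>" "\<mu> \<le> p"
    and G2_crit: "CARD('n) \<ge> 3 \<Longrightarrow> p < 2 * real CARD('n) / (real CARD('n) - 2)"
    and G2: "\<And>x u. \<bar>g x u\<bar> \<le> a * (\<bar>u\<bar> powr (\<mu> - 1) + \<bar>u\<bar> powr (p - 1))"
    and G3_b: "b > 0"
    and G3: "\<And>x u. \<bar>u\<bar> \<le> 1 \<Longrightarrow> prim g x u \<ge> b * \<bar>u\<bar> powr \<mu>"
    and G4: "\<And>M. \<exists>R. \<forall>x u. \<bar>u\<bar> \<ge> R \<longrightarrow> prim g x u / u\<^sup>2 \<ge> M"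
    and G5: "\<And>x. strict_mono_on {0<..} (\<lambda>u. g x u / \<bar>u\<bar>) \<and>
                  strict_mono_on {..<0} (\<lambda>u. g x u / \<bar>u\<bar>)"
  shows "\<exists>c>0. \<forall>u. in_L2mu \<mu> u \<longrightarrow>
           (\<integral>\<^sup>+ x. ennreal (prim g x (u x)) \<partial>lborel)
             \<ge> ennreal (c * min ((L2mu_norm \<mu> u)\<^sup>2) ((L2mu_norm \<mu> u) powr \<mu>))"
proof -
  have g0: "g x 0 = 0" for x using G2[of x 0] G2_mu by simp
  have g_cont: "continuous_on UNIV (g x)" for x
    using continuous_on_compose2[OF G1_cont, of UNIV "\<lambda>s. (x, s)"] by (simp add: continuous_on_Pair)
  have pointwise: "b * (\<bar>large_part u x\<bar> powr 2 + \<bar>small_part u x\<bar> powr \<mu>) \<le> prim g x (u x)"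
    for u :: "real^'n \<Rightarrow> real" and x
    using prim_ge_quadratic[OF g_cont g0 G3 G5, of "u x"] G3[of "u x" x] G2_mu
    by (auto simp: large_part_def small_part_def abs_powr_two)
  define C where "C = 4 + 2 powr \<mu>"
  have "C > 0" unfolding C_def by (simp add: add_pos_nonneg)
  show ?thesis
  proof (intro exI[of _ "b / C"] conjI allI impI)
    fix u :: "real^'n \<Rightarrow> real"
    assume u: "in_L2mu \<mu> u"
    note parts = in_Lp_large_small_parts[OF u G2_mu(1), unfolded in_Lp_def]
    define I where "I = (\<integral>x. \<bar>large_part u x\<bar> powr 2 + \<bar>small_part u x\<bar> powr \<mu> \<partial>lborel)"
    have "b / C * min ((L2mu_norm \<mu> u)\<^sup>2) ((L2mu_norm \<mu> u) powr \<mu>) \<le> b / C * (C * I)"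
      using min_square_powr_L2mu_norm_le[OF u G2_mu(1)] parts \<open>C > 0\<close> G3_b
      by (intro mult_left_mono) (simp_all add: I_def C_def)
    also have "\<dots> = b * I" using \<open>C > 0\<close> by simp
    finally have "ennreal (b / C * min ((L2mu_norm \<mu> u)\<^sup>2) ((L2mu_norm \<mu> u) powr \<mu>))
        \<le> (\<integral>\<^sup>+ x. ennreal (b * (\<bar>large_part u x\<bar> powr 2 + \<bar>small_part u x\<bar> powr \<mu>)) \<partial>lborel)"
      using parts G3_b by (subst nn_integral_eq_integral) (auto simp: I_def)
    also have "\<dots> \<le> (\<integral>\<^sup>+ x. ennreal (prim g x (u x)) \<partial>lborel)"
      by (intro nn_integral_mono ennreal_leI pointwise)
    finally show "ennreal (b / C * min ((L2mu_norm \<mu> u)\<^sup>2) ((L2mu_norm \<mu> u) powr \<mu>))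
                    \<le> (\<integral>\<^sup>+ x. ennreal (prim g x (u x)) \<partial>lborel)" .
  qed (use G3_b \<open>C > 0\<close> in simp)
qed

end
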